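(* Let $I=\{i_1<i_2<\dots<i_\ell\}$ be a nonempty finite set of positive integers with $m=i_\ell$. For $1\le k\le \ell$ define $$I_k=\{i_1,\dots,i_{k-1},\,i_k-1,\dots,i_\ell-1\}\setminus\{0\},\qquad \hat I_k=\{i_1,\dots,i_{k-1},\,i_{k+1}-1,\dots,i_\ell-1\},$$ let $I'=\{i_k\in I\mid i_k-1\notin I\}$ and $I''=I'\setminus\{1\}$. Then for all integers $n>m$, $$d(I;n+1)=d(I;n)+\sum_{k:\, i_k\in I''} d(I_k;n)+\sum_{k:\, i_k\in I'} d(\hat I_k;n).$$
   Context: For a permutation $\pi=\pi_1\cdots\pi_n$ of $[n]$, $\mathrm{Des}\,\pi=\{i\mid \pi_i>\pi_{i+1}\}$. For a finite set $J$ of positive integers and $n>\max(J\cup\{0\})$, $d(J;n)=\#\{\pi\in\mathfrak S_n\mid \mathrm{Des}\,\pi=J\}$. *)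

theory Defs
  imports "HOL-Combinatorics.Permutations"
begin

definition Des :: "nat \<Rightarrow> (nat \<Rightarrow> nat) \<Rightarrow> nat set" where
  "Des n \<pi> = {i. 1 \<le> i \<and> i < n \<and> \<pi> i > \<pi> (Suc i)}"

definition d :: "nat set \<Rightarrow> nat \<Rightarrow> nat" where
  "d J n = card {\<pi>. \<pi> permutes {1..n} \<and> Des n \<pi> = J}"

text \<open>For x = i_k in I: I_k and hat I_k, indexed by the element i_k itself.\<close>

definition Ik :: "nat set \<Rightarrow> nat \<Rightarrow> nat set" where
  "Ik I x = ({y \<in> I. y < x} \<union> {y - 1 | y. y \<in> I \<and> x \<le> y}) - {0}"

definition Ik_hat :: "nat set \<Rightarrow> nat \<Rightarrow> nat set" where
  "Ik_hat I x = {y \<in> I. y < x} \<union> {y - 1 | y. y \<in> I \<and> x < y}"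

definition I' :: "nat set \<Rightarrow> nat set" where
  "I' I = {x \<in> I. x - 1 \<notin> I}"

definition I'' :: "nat set \<Rightarrow> nat set" where
  "I'' I = I' I - {1}"

end

theory Submission
  imports Defs
begin

text \<open>
  Classify the permutations of [n+1] with descent set I by the position j of the letter n+1.
  For j = n+1, deleting it leaves a permutation of [n] with the same descent set. For j \<le> n,
  deleting it leaves a permutation \<sigma> of [n]; the descents of the original permutation are those
  of \<sigma>, shifted by one from position j on, together with j itself, while j-1 becomes an ascent.
  So j \<in> I and j-1 \<notin> I, i.e. j \<in> I' I, and the descent set of \<sigma> is forced by I except at
  position j-1: it is Ik_hat I j, or, if j > 1 and j-1 is a descent of \<sigma>, Ik I j.
\<close>

definition d_max_at :: "nat set \<Rightarrow> nat \<Rightarrow> nat \<Rightarrow> nat" where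
  "d_max_at J n j = card {\<pi>. \<pi> permutes {1..n} \<and> Des n \<pi> = J \<and> \<pi> j = n}"

definition perm_insert_max :: "nat \<Rightarrow> nat \<Rightarrow> (nat \<Rightarrow> nat) \<Rightarrow> nat \<Rightarrow> nat" where
  "perm_insert_max n j \<sigma> i =
    (if i < j then \<sigma> i else if i = j then Suc n else if i \<le> Suc n then \<sigma> (i - 1) else i)"

definition perm_delete :: "nat \<Rightarrow> nat \<Rightarrow> (nat \<Rightarrow> nat) \<Rightarrow> nat \<Rightarrow> nat" where
  "perm_delete n j \<pi> i = (if i < j then \<pi> i else if i \<le> n then \<pi> (Suc i) else i)"

definition des_insert :: "nat \<Rightarrow> nat set \<Rightarrow> nat set" where
  "des_insert j D = {i \<in> D. Suc i < j} \<union> {j} \<union> Suc ` {i \<in> D. j \<le> i}"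

lemma card_permutes_eq_sum_preimage:
  assumes "finite S" "a \<in> S"
  shows "card {p. p permutes S \<and> P p} = (\<Sum>j\<in>S. card {p. p permutes S \<and> P p \<and> p j = a})"
proof -
  have "{p. p permutes S \<and> P p} = (\<Union>j\<in>S. {p. p permutes S \<and> P p \<and> p j = a})"
  proof (intro set_eqI iffI)
    fix p assume p: "p \<in> {p. p permutes S \<and> P p}"
    then have "p permutes S" by simp
    then have "inv p a \<in> S" "p (inv p a) = a"
      using assms(2) by (simp_all add: permutes_in_image[OF permutes_inv] permutes_inverses(1))
    with p show "p \<in> (\<Union>j\<in>S. {p. p permutes S \<and> P p \<and> p j = a})" by blast
  qed blast
  also have "card \<dots> = (\<Sum>j\<in>S. card {p. p permutes S \<and> P p \<and> p j = a})"
  proof (rule card_UN_disjoint)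
    have "finite {p. p permutes S}" using assms(1) by (rule finite_permutations)
    then show "\<forall>j\<in>S. finite {p. p permutes S \<and> P p \<and> p j = a}"
      by (auto intro: finite_subset[rotated])
    show "\<forall>i\<in>S. \<forall>j\<in>S. i \<noteq> j \<longrightarrow>
        {p. p permutes S \<and> P p \<and> p i = a} \<inter> {p. p permutes S \<and> P p \<and> p j = a} = {}"
      by (auto dest: permutes_inj simp: inj_eq)
  qed (rule assms(1))
  finally show ?thesis .
qed

lemma d_eq_sum_d_max_at:
  assumes "1 \<le> n"
  shows "d J n = (\<Sum>j\<in>{1..n}. d_max_at J n j)"
  unfolding d_def d_max_at_def
  using assms by (intro card_permutes_eq_sum_preimage[where P = "\<lambda>\<pi>. Des n \<pi> = J"]) simp_all

lemma Des_Suc_eq: "\<pi> (Suc n) = Suc n \<Longrightarrow> \<pi> n \<le> n \<Longrightarrow> Des (Suc n) \<pi> = Des n \<pi>"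
  unfolding Des_def by (auto simp: less_Suc_eq)

lemma permutes_atLeastAtMost_Suc_fixing_iff:
  "\<pi> permutes {1..Suc n} \<and> \<pi> (Suc n) = Suc n \<longleftrightarrow> \<pi> permutes {1..n}"
proof
  assume \<pi>: "\<pi> permutes {1..Suc n} \<and> \<pi> (Suc n) = Suc n"
  show "\<pi> permutes {1..n}"
  proof (rule permutes_superset)
    show "\<pi> permutes {1..Suc n}" using \<pi> by simp
    show "\<pi> x = x" if "x \<in> {1..Suc n} - {1..n}" for x
      using that \<pi> by (auto simp: le_Suc_eq)
  qed
next
  assume "\<pi> permutes {1..n}"
  then show "\<pi> permutes {1..Suc n} \<and> \<pi> (Suc n) = Suc n"
    using permutes_subset[of \<pi> "{1..n}" "{1..Suc n}"] permutes_not_in[of \<pi> "{1..n}" "Suc n"] by auto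
qed

lemma d_max_at_last: "d_max_at J (Suc n) (Suc n) = d J n"
proof -
  have "\<pi> n \<le> n" if "\<pi> permutes {1..n}" for \<pi>
    using permutes_in_seg[OF that, of n] permutes_not_in[OF that, of 0] by (cases n) auto
  then have "\<pi> permutes {1..Suc n} \<and> Des (Suc n) \<pi> = J \<and> \<pi> (Suc n) = Suc n \<longleftrightarrow>
        \<pi> permutes {1..n} \<and> Des n \<pi> = J" for \<pi>
    using permutes_atLeastAtMost_Suc_fixing_iff[of \<pi> n] Des_Suc_eq[of \<pi> n] by blast
  then show ?thesis unfolding d_max_at_def d_def by presburger
qed

lemma perm_insert_max_permutes:
  assumes \<sigma>: "\<sigma> permutes {1..n}" and j: "1 \<le> j" "j \<le> n"
  shows "perm_insert_max n j \<sigma> permutes {1..Suc n}"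
proof (rule inj_imp_permutes)
  have off_max: "perm_insert_max n j \<sigma> i \<in> {1..n}" if i: "i \<in> {1..Suc n}" "i \<noteq> j" for i
  proof (cases "i < j")
    case True
    then show ?thesis using i j permutes_in_image[OF \<sigma>, of i] by (auto simp: perm_insert_max_def)
  next
    case False
    then have "i - 1 \<in> {1..n}" using i j by auto
    then show ?thesis using False i permutes_in_image[OF \<sigma>, of "i - 1"] by (auto simp: perm_insert_max_def)
  qed
  have at_max_iff: "perm_insert_max n j \<sigma> i = Suc n \<longleftrightarrow> i = j" if "i \<in> {1..Suc n}" for i
    using off_max[OF that] by (cases "i = j") (auto simp: perm_insert_max_def)
  show "perm_insert_max n j \<sigma> i \<in> {1..Suc n}" if "i \<in> {1..Suc n}" for i
    using off_max[OF that] at_max_iff[OF that] by (cases "i = j") auto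
  show "inj_on (perm_insert_max n j \<sigma>) {1..Suc n}"
  proof (rule inj_onI)
    fix a b assume a: "a \<in> {1..Suc n}" and b: "b \<in> {1..Suc n}"
      and eq: "perm_insert_max n j \<sigma> a = perm_insert_max n j \<sigma> b"
    show "a = b"
    proof (cases "a = j \<or> b = j")
      case True
      then show ?thesis using eq at_max_iff[OF a] at_max_iff[OF b] by metis
    next
      case False
      then have "\<sigma> (if a < j then a else a - 1) = \<sigma> (if b < j then b else b - 1)"
        using eq a b by (auto simp: perm_insert_max_def)
      then have "(if a < j then a else a - 1) = (if b < j then b else b - 1)"
        using permutes_inj[OF \<sigma>] by (simp add: inj_eq)
      then show ?thesis using False by (auto split: if_splits)
    qed
  qed
qed (use j permutes_not_in[OF \<sigma>] in \<open>auto simp: perm_insert_max_def\<close>)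

lemma perm_delete_permutes:
  assumes \<pi>: "\<pi> permutes {1..Suc n}" and max: "\<pi> j = Suc n" and j: "1 \<le> j" "j \<le> n"
  shows "perm_delete n j \<pi> permutes {1..n}"
proof (rule inj_imp_permutes)
  have off_max: "\<pi> i \<in> {1..n}" if i: "i \<in> {1..Suc n}" "i \<noteq> j" for i
  proof -
    have "\<pi> i \<in> {1..Suc n}" using permutes_in_image[OF \<pi>] i(1) by blast
    moreover have "\<pi> i \<noteq> \<pi> j" using permutes_inj[OF \<pi>] i(2) by (simp add: inj_eq)
    ultimately show ?thesis using max by auto
  qed
  show "perm_delete n j \<pi> i \<in> {1..n}" if i: "i \<in> {1..n}" for i
  proof (cases "i < j")
    case True
    then show ?thesis using i off_max[of i] by (simp add: perm_delete_def)
  next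
    case False
    then show ?thesis using i off_max[of "Suc i"] by (simp add: perm_delete_def)
  qed
  show "perm_delete n j \<pi> i = i" if "i \<notin> {1..n}" for i
  proof (cases "i = 0")
    case True
    then show ?thesis using j permutes_not_in[OF \<pi>, of 0] by (simp add: perm_delete_def)
  next
    case False
    then show ?thesis using that j by (simp add: perm_delete_def)
  qed
  show "inj_on (perm_delete n j \<pi>) {1..n}"
  proof (rule inj_onI)
    fix a b assume a: "a \<in> {1..n}" and b: "b \<in> {1..n}"
      and "perm_delete n j \<pi> a = perm_delete n j \<pi> b"
    then have "\<pi> (if a < j then a else Suc a) = \<pi> (if b < j then b else Suc b)"
      by (simp add: perm_delete_def split: if_splits)
    then have "(if a < j then a else Suc a) = (if b < j then b else Suc b)"
      using permutes_inj[OF \<pi>] by (simp add: inj_eq)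
    then show "a = b" by (auto split: if_splits)
  qed
qed simp

lemma perm_insert_max_delete:
  assumes "\<pi> permutes {1..Suc n}" "\<pi> j = Suc n" "1 \<le> j" "j \<le> n"
  shows "perm_insert_max n j (perm_delete n j \<pi>) = \<pi>"
  using assms permutes_not_in[OF assms(1)] by (auto simp: fun_eq_iff perm_insert_max_def perm_delete_def)

lemma perm_delete_insert_max:
  assumes "\<sigma> permutes {1..n}" "1 \<le> j"
  shows "perm_delete n j (perm_insert_max n j \<sigma>) = \<sigma>"
  using assms permutes_not_in[OF assms(1)] by (auto simp: fun_eq_iff perm_insert_max_def perm_delete_def)

lemma Des_perm_insert_max:
  assumes \<sigma>: "\<sigma> permutes {1..n}" and j: "1 \<le> j" "j \<le> n"
  shows "Des (Suc n) (perm_insert_max n j \<sigma>) = des_insert j (Des n \<sigma>)"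
proof -
  have range: "\<sigma> i \<le> n" if "1 \<le> i" "i \<le> n" for i
    using permutes_in_image[OF \<sigma>] that by auto
  have "i \<in> Des (Suc n) (perm_insert_max n j \<sigma>) \<longleftrightarrow> i \<in> des_insert j (Des n \<sigma>)" for i
  proof -
    consider "Suc i < j" | "Suc i = j" | "i = j" | k where "i = Suc k" "j \<le> k"
      by (metis less_Suc_eq less_imp_Suc_add linorder_neqE_nat le_add1)
    then show ?thesis
      by cases (use j range[of i] in \<open>auto simp: perm_insert_max_def Des_def des_insert_def\<close>)
  qed
  then show ?thesis by blast
qed

lemma d_max_at_eq_card_des_insert:
  assumes j: "1 \<le> j" "j \<le> n"
  shows "d_max_at J (Suc n) j = card {\<sigma>. \<sigma> permutes {1..n} \<and> des_insert j (Des n \<sigma>) = J}"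
proof -
  let ?A = "{\<pi>. \<pi> permutes {1..Suc n} \<and> Des (Suc n) \<pi> = J \<and> \<pi> j = Suc n}"
  let ?B = "{\<sigma>. \<sigma> permutes {1..n} \<and> des_insert j (Des n \<sigma>) = J}"
  have "bij_betw (perm_delete n j) ?A ?B"
  proof (rule bij_betw_byWitness[where f' = "perm_insert_max n j"])
    show "\<forall>\<pi>\<in>?A. perm_insert_max n j (perm_delete n j \<pi>) = \<pi>"
      using perm_insert_max_delete j by blast
    show "\<forall>\<sigma>\<in>?B. perm_delete n j (perm_insert_max n j \<sigma>) = \<sigma>"
      using perm_delete_insert_max j by blast
    show "perm_delete n j ` ?A \<subseteq> ?B"
    proof
      fix \<sigma> assume "\<sigma> \<in> perm_delete n j ` ?A"
      then obtain \<pi> where \<pi>: "\<pi> \<in> ?A" and \<sigma>: "\<sigma> = perm_delete n j \<pi>" by blast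
      have \<sigma>_perm: "\<sigma> permutes {1..n}" using \<pi> \<sigma> perm_delete_permutes j by blast
      have "des_insert j (Des n \<sigma>) = Des (Suc n) (perm_insert_max n j \<sigma>)"
        using Des_perm_insert_max[OF \<sigma>_perm j] by simp
      also have "perm_insert_max n j \<sigma> = \<pi>" using \<pi> \<sigma> perm_insert_max_delete j by blast
      finally show "\<sigma> \<in> ?B" using \<sigma>_perm \<pi> by simp
    qed
    show "perm_insert_max n j ` ?B \<subseteq> ?A"
    proof
      fix \<pi> assume "\<pi> \<in> perm_insert_max n j ` ?B"
      then obtain \<sigma> where \<sigma>: "\<sigma> \<in> ?B" and \<pi>: "\<pi> = perm_insert_max n j \<sigma>" by blast
      have "\<pi> j = Suc n" using \<pi> by (simp add: perm_insert_max_def)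
      then show "\<pi> \<in> ?A"
        using \<sigma> \<pi> perm_insert_max_permutes[OF _ j] Des_perm_insert_max[OF _ j] by simp
    qed
  qed
  then show ?thesis unfolding d_max_at_def by (rule bij_betw_same_card)
qed

lemma mem_des_insert:
  assumes "1 \<le> j"
  shows "y \<in> des_insert j D \<longleftrightarrow> (y < j - 1 \<and> y \<in> D) \<or> y = j \<or> (j < y \<and> y - 1 \<in> D)"
  using assms by (cases y) (auto simp: des_insert_def)

lemma mem_Ik_hat: "y \<in> Ik_hat I j \<longleftrightarrow> (y < j \<and> y \<in> I) \<or> (j \<le> y \<and> Suc y \<in> I)"
  unfolding Ik_hat_def by force

lemma Ik_eq_insert_Ik_hat:
  assumes "0 \<notin> I" "j \<in> I"
  shows "Ik I j = insert (j - 1) (Ik_hat I j) - {0}"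
  using assms unfolding Ik_def Ik_hat_def by (auto simp: le_eq_less_or_eq)

lemma des_insert_eq_iff:
  assumes "1 \<le> j"
  shows "des_insert j D = I \<longleftrightarrow> j \<in> I' I \<and> D - {j - 1} = Ik_hat I j"
proof
  assume "des_insert j D = I"
  then have I: "y \<in> I \<longleftrightarrow> (y < j - 1 \<and> y \<in> D) \<or> y = j \<or> (j < y \<and> y - 1 \<in> D)" for y
    using mem_des_insert[OF assms] by blast
  have "j \<in> I' I" using I[of j] I[of "j - 1"] assms by (auto simp: I'_def)
  moreover have "y \<in> D - {j - 1} \<longleftrightarrow> y \<in> Ik_hat I j" for y
  proof -
    consider "y < j - 1" | "y = j - 1" | "j \<le> y" by linarith
    then show ?thesis
      by cases (use I[of y] I[of "Suc y"] assms in \<open>auto simp: mem_Ik_hat\<close>)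
  qed
  ultimately show "j \<in> I' I \<and> D - {j - 1} = Ik_hat I j" by blast
next
  assume "j \<in> I' I \<and> D - {j - 1} = Ik_hat I j"
  then have j: "j \<in> I" "j - 1 \<notin> I" and D: "\<And>y. y \<noteq> j - 1 \<Longrightarrow> y \<in> D \<longleftrightarrow> y \<in> Ik_hat I j"
    by (auto simp: I'_def)
  have "y \<in> des_insert j D \<longleftrightarrow> y \<in> I" for y
  proof -
    consider "y < j - 1" | "y = j - 1" | "y = j" | "j < y" by linarith
    then show ?thesis
      by cases (use D[of y] D[of "y - 1"] j assms in \<open>auto simp: mem_des_insert mem_Ik_hat\<close>)
  qed
  then show "des_insert j D = I" by blast
qed

lemma diff_pred_eq_Ik_hat_iff:
  assumes I: "0 \<notin> I" and D: "0 \<notin> D" and j: "j \<in> I' I" "1 \<le> j"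
  shows "D - {j - 1} = Ik_hat I j \<longleftrightarrow> D = Ik_hat I j \<or> (j \<in> I'' I \<and> D = Ik I j)"
proof -
  have jI: "j \<in> I" "j - 1 \<notin> I" using j(1) by (auto simp: I'_def)
  have hat: "j - 1 \<notin> Ik_hat I j" "0 \<notin> Ik_hat I j"
    using jI I j(2) by (auto simp: mem_Ik_hat)
  have I'': "j \<in> I'' I \<longleftrightarrow> j - 1 \<noteq> 0" using j by (auto simp: I''_def)
  have Ik: "Ik I j = insert (j - 1) (Ik_hat I j)" if "j - 1 \<noteq> 0"
    using Ik_eq_insert_Ik_hat[OF I jI(1)] hat(2) that by auto
  show ?thesis
  proof
    assume "D - {j - 1} = Ik_hat I j"
    then have "D = Ik_hat I j \<or> D = insert (j - 1) (Ik_hat I j)" using hat(1) by blast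
    then show "D = Ik_hat I j \<or> (j \<in> I'' I \<and> D = Ik I j)"
    proof
      assume D': "D = insert (j - 1) (Ik_hat I j)"
      then have "j - 1 \<noteq> 0" using D by auto
      then show ?thesis using D' I'' Ik by simp
    qed simp
  next
    assume "D = Ik_hat I j \<or> (j \<in> I'' I \<and> D = Ik I j)"
    then show "D - {j - 1} = Ik_hat I j"
      using hat(1) I'' Ik by auto
  qed
qed

lemma d_max_at_interior:
  assumes I: "0 \<notin> I" and j: "1 \<le> j" "j \<le> n"
  shows "d_max_at I (Suc n) j =
    (if j \<in> I'' I then d (Ik I j) n else 0) + (if j \<in> I' I then d (Ik_hat I j) n else 0)"
proof -
  have "des_insert j (Des n \<sigma>) = I \<longleftrightarrow>
      j \<in> I' I \<and> (Des n \<sigma> = Ik_hat I j \<or> (j \<in> I'' I \<and> Des n \<sigma> = Ik I j))" for \<sigma>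
    using des_insert_eq_iff[OF j(1)] diff_pred_eq_Ik_hat_iff[OF I _ _ j(1), of "Des n \<sigma>"]
    by (auto simp: Des_def)
  then have max_at: "d_max_at I (Suc n) j = card {\<sigma>. \<sigma> permutes {1..n} \<and>
      j \<in> I' I \<and> (Des n \<sigma> = Ik_hat I j \<or> (j \<in> I'' I \<and> Des n \<sigma> = Ik I j))}"
    using d_max_at_eq_card_des_insert[OF j] by presburger
  have I''_sub: "I'' I \<subseteq> I' I" by (auto simp: I''_def)
  show ?thesis
  proof (cases "j \<in> I'' I")
    case True
    then have "j - 1 \<in> Ik I j" "j - 1 \<notin> Ik_hat I j"
      using j by (auto simp: I''_def I'_def Ik_def mem_Ik_hat)
    then have "Ik_hat I j \<noteq> Ik I j" by blast
    moreover have "finite {\<sigma>. \<sigma> permutes {1..n}}" by (rule finite_permutations) simp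
    ultimately have "card ({\<sigma>. \<sigma> permutes {1..n} \<and> Des n \<sigma> = Ik_hat I j} \<union>
        {\<sigma>. \<sigma> permutes {1..n} \<and> Des n \<sigma> = Ik I j}) = d (Ik_hat I j) n + d (Ik I j) n"
      unfolding d_def by (intro card_Un_disjoint) (auto intro: finite_subset[rotated])
    then show ?thesis using max_at True I''_sub by (auto simp: Collect_disj_eq conj_disj_distribL)
  next
    case False
    then show ?thesis using max_at by (simp add: d_def)
  qed
qed

theorem theorem2p4:
  fixes I :: "nat set" and n :: nat
  assumes "finite I" and "I \<noteq> {}" and "0 \<notin> I" and "n > Max I"
  shows "d I (Suc n) = d I n + (\<Sum>x\<in>I'' I. d (Ik I x) n) + (\<Sum>x\<in>I' I. d (Ik_hat I x) n)"
proof -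
  have "I \<subseteq> {1..n}"
  proof
    fix x assume "x \<in> I"
    then show "x \<in> {1..n}" using assms(3,4) Max_ge[OF assms(1), of x] by (cases x) auto
  qed
  then have sub: "I'' I \<subseteq> {1..n}" "I' I \<subseteq> {1..n}" by (auto simp: I''_def I'_def)
  have "d I (Suc n) = (\<Sum>j\<in>{1..Suc n}. d_max_at I (Suc n) j)"
    by (rule d_eq_sum_d_max_at) simp
  also have "\<dots> = d I n + (\<Sum>j\<in>{1..n}. d_max_at I (Suc n) j)"
    by (simp add: d_max_at_last)
  also have "(\<Sum>j\<in>{1..n}. d_max_at I (Suc n) j) = (\<Sum>j\<in>{1..n}.
      (if j \<in> I'' I then d (Ik I j) n else 0) + (if j \<in> I' I then d (Ik_hat I j) n else 0))"
    using d_max_at_interior[OF assms(3)] by (intro sum.cong) simp_all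
  also have "\<dots> = (\<Sum>x\<in>I'' I. d (Ik I x) n) + (\<Sum>x\<in>I' I. d (Ik_hat I x) n)"
    using sub by (simp add: sum.distrib sum.If_cases Int_absorb1 inf.absorb2)
  finally show ?thesis by (simp add: add.assoc)
qed

end
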